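(* Let $X$ be a complex Banach space, $n\ge1$, $a_1,\ldots,a_n\in\mathbb{C}$, and let $D:\mathcal{C}^n(\mathbb{R},X)\to\mathcal{C}(\mathbb{R},X)$ be $D(y)=y^{(n)}+a_1y^{(n-1)}+\cdots+a_ny$. Suppose the characteristic polynomial $P(z)=z^n+a_1z^{n-1}+\cdots+a_n$ has $n$ distinct roots $r_1,\ldots,r_n$ with $\operatorname{Re} r_k\neq0$ for all $k$, and let $\varepsilon>0$. Let $V=V(r_1,\ldots,r_n)$, $V_k=V(r_1,\ldots,r_{k-1},r_{k+1},\ldots,r_n)$, and define $K$ by: (i) if $\operatorname{Re} r_k>0$ for all $k$: $K=\frac{1}{|V|}\int_0^\infty\Big|\sum_{k=1}^n(-1)^kV_ke^{-r_kx}\Big|dx$; (ii) if $\operatorname{Re} r_k<0$ for all $k$: $K=\frac{1}{|V|}\int_0^\infty\Big|\sum_{k=1}^n(-1)^kV_ke^{r_kx}\Big|dx$; (iii) if, for some $1\le p<n$ (after labeling the roots accordingly), $\operatorname{Re} r_k>0$ for $1\le k\le p$ and $\operatorname{Re} r_k<0$ for $p+1\le k\le n$: $K=\frac{1}{|V|}\int_0^\infty\Big(\Big|\sum_{k=1}^p(-1)^kV_ke^{-r_kx}\Big|+\Big|\sum_{k=p+1}^n(-1)^kV_ke^{r_kx}\Big|\Big)dx$. Then for every $y\in\mathcal{C}^n(\mathbb{R},X)$ with $\|D(y)\|_\infty\le\varepsilon$ there exists a unique $y_H\in\operatorname{Ker}D$ such that $\|y-y_H\|_\infty\le K\varepsi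lon$.
   Context: $\mathcal{C}^n(\mathbb{R},X)$ is the space of $n$ times differentiable functions $\mathbb{R}\to X$ with continuous $n$-th derivative, $\mathcal{C}(\mathbb{R},X)=\mathcal{C}^0(\mathbb{R},X)$; both carry the gauge $\|f\|_\infty=\sup_{t\in\mathbb{R}}\|f(t)\|\in[0,\infty]$. $\operatorname{Ker}D=\{y:D(y)=0\}=\{\sum_{k=1}^nC_ke^{r_kx}: C_k\in X\}$. For numbers $x_1,\ldots,x_m$, $V(x_1,\ldots,x_m)=\det(x_j^{i-1})_{1\le i,j\le m}=\prod_{1\le i<j\le m}(x_j-x_i)$ is the Vandermonde determinant (equal to $1$ when $m\le1$). *)

theory Defs
  imports "HOL-Analysis.Analysis"
begin

class complex_vector = real_vector +
  fixes cscale :: "complex \<Rightarrow> 'a \<Rightarrow> 'a"  (infixr \<open>*\<^sub>C\<close> 75)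
  assumes cscale_add_right: "c *\<^sub>C (x + y) = c *\<^sub>C x + c *\<^sub>C y"
    and cscale_add_left: "(b + c) *\<^sub>C x = b *\<^sub>C x + c *\<^sub>C x"
    and cscale_cscale: "b *\<^sub>C (c *\<^sub>C x) = (b * c) *\<^sub>C x"
    and cscale_one: "1 *\<^sub>C x = x"
    and cscale_of_real: "complex_of_real r *\<^sub>C x = r *\<^sub>R x"

class complex_normed_vector = complex_vector + real_normed_vector +
  assumes norm_cscale: "norm (c *\<^sub>C x) = cmod c * norm x"

class complex_banach = complex_normed_vector + banach

fun nth_deriv :: "nat \<Rightarrow> (real \<Rightarrow> 'a::real_normed_vector) \<Rightarrow> real \<Rightarrow> 'a" where
  "nth_deriv 0 f = f"
| "nth_deriv (Suc k) f = (\<lambda>t. vector_derivative (nth_deriv k f) (at t))"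

definition Cn :: "nat \<Rightarrow> (real \<Rightarrow> 'a::real_normed_vector) set" where
  "Cn n = {f. (\<forall>k<n. \<forall>t. nth_deriv k f differentiable (at t))
              \<and> continuous_on UNIV (nth_deriv n f)}"

definition sup_norm :: "(real \<Rightarrow> 'a::real_normed_vector) \<Rightarrow> ereal" where
  "sup_norm f = (SUP t. ereal (norm (f t)))"

definition Dop :: "nat \<Rightarrow> (nat \<Rightarrow> complex) \<Rightarrow> (real \<Rightarrow> 'a::complex_normed_vector) \<Rightarrow> real \<Rightarrow> 'a" where
  "Dop n a y = (\<lambda>t. nth_deriv n y t + (\<Sum>j=1..n. a j *\<^sub>C nth_deriv (n - j) y t))"

definition char_poly :: "nat \<Rightarrow> (nat \<Rightarrow> complex) \<Rightarrow> complex \<Rightarrow> complex" where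
  "char_poly n a z = z ^ n + (\<Sum>j=1..n. a j * z ^ (n - j))"

definition vandermonde :: "complex list \<Rightarrow> complex" where
  "vandermonde xs = (\<Prod>j<length xs. \<Prod>i<j. xs ! j - xs ! i)"

end

theory Submission
  imports Defs "HOL-Computational_Algebra.Polynomial"
begin

text \<open>
  Factor \<open>P(z) = (z - r\<^sub>k) Q\<^sub>k(z)\<close>. The function \<open>u\<^sub>k = Q\<^sub>k(d/dt) y\<close> satisfies the first order
  equation \<open>u\<^sub>k' = r\<^sub>k u\<^sub>k + D(y)\<close>, and Lagrange interpolation \<open>\<Sum>\<^sub>k Q\<^sub>k / Q\<^sub>k(r\<^sub>k) = 1\<close> gives
  \<open>y = \<Sum>\<^sub>k u\<^sub>k / Q\<^sub>k(r\<^sub>k)\<close>. Integrating each equation from \<open>+\<infinity>\<close> when \<open>Re r\<^sub>k > 0\<close> and from \<open>-\<infinity>\<close>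
  when \<open>Re r\<^sub>k < 0\<close> produces \<open>y\<^sub>H \<in> Ker D\<close> such that \<open>y - y\<^sub>H\<close> is the convolution of \<open>D(y)\<close> with a
  Green's function of \<open>L\<^sup>1\<close> norm \<open>K\<close>; the weights \<open>1 / Q\<^sub>k(r\<^sub>k)\<close> are the Vandermonde quotients
  \<open>(-1)^(n-k) V\<^sub>k / V\<close>. For uniqueness, the difference of two admissible \<open>y\<^sub>H\<close> is a bounded
  exponential sum \<open>\<Sum>\<^sub>k exp (r\<^sub>k t) G\<^sub>k\<close> with all \<open>Re r\<^sub>k \<noteq> 0\<close>; a finite difference operator isolating one
  exponential forces every \<open>G\<^sub>k = 0\<close>.
\<close>

interpretation cscale: module "cscale :: complex \<Rightarrow> 'a::complex_vector \<Rightarrow> 'a"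
  by unfold_locales (auto simp: cscale_add_right cscale_add_left cscale_cscale cscale_one)

lemma cscale_scaleR_commute: "c *\<^sub>C (s *\<^sub>R x) = s *\<^sub>R (c *\<^sub>C (x::'a::complex_vector))"
  by (metis cscale_cscale cscale_of_real mult.commute)

lemma bounded_bilinear_cscale: "bounded_bilinear (cscale :: complex \<Rightarrow> 'a::complex_normed_vector \<Rightarrow> 'a)"
proof
  fix a a' :: complex and b b' :: 'a and s :: real
  show "(a + a') *\<^sub>C b = a *\<^sub>C b + a' *\<^sub>C b" by (rule cscale_add_left)
  show "a *\<^sub>C (b + b') = a *\<^sub>C b + a *\<^sub>C b'" by (rule cscale_add_right)
  show "(s *\<^sub>R a) *\<^sub>C b = s *\<^sub>R (a *\<^sub>C b)"
    by (metis cscale_cscale cscale_of_real scaleR_conv_of_real)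
  show "a *\<^sub>C (s *\<^sub>R b) = s *\<^sub>R (a *\<^sub>C b)" by (rule cscale_scaleR_commute)
  show "\<exists>K. \<forall>a b. norm (a *\<^sub>C (b::'a)) \<le> norm a * norm b * K"
    by (rule exI[of _ 1]) (simp add: norm_cscale)
qed

lemmas bounded_linear_cscale_right = bounded_bilinear.bounded_linear_right[OF bounded_bilinear_cscale]

lemma has_vector_derivative_cscale:
  assumes "(f has_vector_derivative f') (at x within S)"
    and "(g has_vector_derivative g') (at x within S)"
  shows "((\<lambda>x. f x *\<^sub>C (g x::'a::complex_normed_vector)) has_vector_derivative
           f x *\<^sub>C g' + f' *\<^sub>C g x) (at x within S)"
  using bounded_bilinear.has_vector_derivative[OF bounded_bilinear_cscale assms] by simp

lemma has_vector_derivative_cscale_right: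
  assumes "(g has_vector_derivative g') (at x within S)"
  shows "((\<lambda>x. c *\<^sub>C (g x::'a::complex_normed_vector)) has_vector_derivative c *\<^sub>C g') (at x within S)"
  using bounded_linear.has_vector_derivative[OF bounded_linear_cscale_right assms] .

lemma has_vector_derivative_cscale_left:
  assumes "(f has_vector_derivative f') (at x within S)"
  shows "((\<lambda>x. f x *\<^sub>C (v::'a::complex_normed_vector)) has_vector_derivative f' *\<^sub>C v) (at x within S)"
  using has_vector_derivative_cscale[OF assms has_vector_derivative_const[of v]] by simp

lemma continuous_on_cscale [continuous_intros]:
  assumes "continuous_on S f" "continuous_on S g"
  shows "continuous_on S (\<lambda>x. f x *\<^sub>C (g x::'a::complex_normed_vector))"
  using bounded_bilinear.continuous_on[OF bounded_bilinear_cscale assms] .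

lemma tendsto_cscale_right [tendsto_intros]:
  "(g \<longlongrightarrow> l) F \<Longrightarrow> ((\<lambda>x. c *\<^sub>C (g x::'a::complex_normed_vector)) \<longlongrightarrow> c *\<^sub>C l) F"
  by (rule bounded_linear.tendsto[OF bounded_linear_cscale_right])

lemma has_vector_derivative_cexp:
  "((\<lambda>t::real. exp (c * complex_of_real t)) has_vector_derivative c * exp (c * complex_of_real t)) (at t within S)"
  by (rule has_vector_derivative_real_field) (auto intro!: derivative_eq_intros)

lemma norm_exp_cscale:
  "norm (exp (c * complex_of_real t) *\<^sub>C (v::'a::complex_normed_vector)) = exp (Re c * t) * norm v"
  by (simp add: norm_cscale)

lemma sup_norm_le_iff: "sup_norm f \<le> ereal c \<longleftrightarrow> (\<forall>t. norm (f t) \<le> c)"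
  unfolding sup_norm_def by (simp add: SUP_le_iff)

section \<open>Vandermonde determinants and Lagrange interpolation\<close>

lemma vandermonde_Nil [simp]: "vandermonde [] = 1"
  by (simp add: vandermonde_def)

lemma vandermonde_Cons: "vandermonde (x # xs) = prod_list (map (\<lambda>z. z - x) xs) * vandermonde xs"
proof -
  have "vandermonde (x # xs) = (\<Prod>j<length xs. \<Prod>i<Suc j. xs ! j - (x # xs) ! i)"
    by (simp add: vandermonde_def prod.lessThan_Suc_shift del: prod.lessThan_Suc)
  also have "\<dots> = (\<Prod>j<length xs. (xs ! j - x) * (\<Prod>i<j. xs ! j - xs ! i))"
    by (simp add: prod.lessThan_Suc_shift del: prod.lessThan_Suc)
  also have "\<dots> = prod_list (map (\<lambda>z. z - x) xs) * vandermonde xs"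
    by (simp add: prod.distrib vandermonde_def prod.list_conv_set_nth atLeast0LessThan)
  finally show ?thesis .
qed

lemma vandermonde_append_Cons:
  "vandermonde (us @ x # ws) =
     vandermonde (us @ ws) * prod_list (map (\<lambda>u. x - u) us) * prod_list (map (\<lambda>w. w - x) ws)"
  by (induction us) (simp_all add: vandermonde_Cons)

lemma vandermonde_nonzero: "distinct xs \<Longrightarrow> vandermonde xs \<noteq> 0"
  by (induction xs) (auto simp: vandermonde_Cons prod_list_zero_iff)

definition lagrange_basis :: "'i set \<Rightarrow> ('i \<Rightarrow> 'a::field) \<Rightarrow> 'i \<Rightarrow> 'a poly" where
  "lagrange_basis I r k = (\<Prod>i\<in>I - {k}. [:- r i, 1:])"

lemma degree_lagrange_basis: "finite I \<Longrightarrow> k \<in> I \<Longrightarrow> degree (lagrange_basis I r k) = card I - 1"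
  unfolding lagrange_basis_def by (subst degree_prod_sum_eq) auto

lemma poly_lagrange_basis_other:
  "finite I \<Longrightarrow> j \<in> I \<Longrightarrow> j \<noteq> k \<Longrightarrow> poly (lagrange_basis I r k) (r j) = 0"
  unfolding lagrange_basis_def poly_prod by (rule prod_zero) auto

lemma poly_lagrange_basis_self:
  assumes "finite I" "inj_on r I" "k \<in> I"
  shows "poly (lagrange_basis I r k) (r k) \<noteq> 0"
  using assms inj_onD[OF assms(2) _ assms(3)]
  unfolding lagrange_basis_def poly_prod by (auto simp: prod_zero_iff)

lemma lagrange_basis_factor: "finite I \<Longrightarrow> k \<in> I \<Longrightarrow> (\<Prod>i\<in>I. [:- r i, 1:]) = [:- r k, 1:] * lagrange_basis I r k"
  unfolding lagrange_basis_def by (rule prod.remove)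

lemma sum_lagrange_basis:
  assumes I: "finite I" "I \<noteq> {}" and inj: "inj_on r I"
  shows "(\<Sum>k\<in>I. smult (inverse (poly (lagrange_basis I r k) (r k))) (lagrange_basis I r k)) = 1"
    (is "?L = 1")
proof (rule poly_eqI_degree[where A = "r ` I"])
  have card: "card (r ` I) = card I" "card I > 0"
    using inj I by (auto simp: card_image card_gt_0_iff)
  have "degree ?L \<le> card I - 1"
    using I by (intro degree_sum_le) (auto intro: order.trans[OF degree_smult_le] simp: degree_lagrange_basis)
  then show "degree ?L < card (r ` I)"
    using card by linarith
  show "degree (1::'b poly) < card (r ` I)"
    using card by simp
  fix z assume "z \<in> r ` I"
  then obtain j where j: "j \<in> I" "z = r j" by auto
  have "poly ?L z = (\<Sum>k\<in>I. if k = j then 1 else 0)"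
    unfolding poly_sum poly_smult j(2) using j I inj
    by (intro sum.cong) (auto simp: poly_lagrange_basis_other poly_lagrange_basis_self)
  then show "poly ?L z = poly 1 z"
    using j I by simp
qed

lemma vandermonde_delete:
  assumes k: "k \<in> {1..n}"
  shows "vandermonde (map r [1..<n+1]) =
           (-1) ^ (n - k) * poly (lagrange_basis {1..n} r k) (r k) * vandermonde (map r ([1..<k] @ [k+1..<n+1]))"
proof -
  define A where "A = (\<Prod>i\<in>{1..<k}. r k - r i)"
  define B where "B = (\<Prod>i\<in>{k+1..<n+1}. r i - r k)"
  have split: "[1..<n+1] = [1..<k] @ k # [k+1..<n+1]"
    using k upt_add_eq_append[of 1 k "n+1-k"] by (auto simp: upt_conv_Cons)
  have V: "vandermonde (map r [1..<n+1]) = vandermonde (map r ([1..<k] @ [k+1..<n+1])) * A * B"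
    by (simp only: split map_append list.map vandermonde_append_Cons map_map o_def A_def B_def set_upt
        prod.distinct_set_conv_list[OF distinct_upt, symmetric])
  have "{1..n} - {k} = {1..<k} \<union> {k+1..<n+1}" using k by auto
  then have "poly (lagrange_basis {1..n} r k) (r k) = A * (\<Prod>i\<in>{k+1..<n+1}. (-1) * (r i - r k))"
    unfolding lagrange_basis_def poly_prod A_def by (simp add: prod.union_disjoint)
  also have "\<dots> = (-1) ^ (n - k) * A * B"
    unfolding prod.distrib B_def by simp
  finally show ?thesis
    using V by (simp add: mult_ac flip: power_mult_distrib)
qed

section \<open>Differential operators with polynomial symbol\<close>

definition poly_diff_op :: "complex poly \<Rightarrow> (real \<Rightarrow> 'a::complex_normed_vector) \<Rightarrow> real \<Rightarrow> 'a" where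
  "poly_diff_op q y t = (\<Sum>i\<le>degree q. coeff q i *\<^sub>C nth_deriv i y t)"

lemma poly_diff_op_eq_sum:
  "degree q \<le> N \<Longrightarrow> poly_diff_op q y t = (\<Sum>i\<le>N. coeff q i *\<^sub>C nth_deriv i y t)"
  unfolding poly_diff_op_def by (rule sum.mono_neutral_left) (auto simp: coeff_eq_0)

lemma poly_diff_op_0 [simp]: "poly_diff_op 0 y t = 0"
  by (simp add: poly_diff_op_def)

lemma poly_diff_op_1 [simp]: "poly_diff_op 1 y t = y t"
  by (simp add: poly_diff_op_def cscale_one)

lemma poly_diff_op_monom: "poly_diff_op (monom c j) y t = c *\<^sub>C nth_deriv j y t"
proof -
  have "poly_diff_op (monom c j) y t = (\<Sum>i\<le>j. if i = j then c *\<^sub>C nth_deriv i y t else 0)"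
    unfolding poly_diff_op_eq_sum[OF degree_monom_le] by (intro sum.cong) (auto simp: coeff_monom)
  then show ?thesis by simp
qed

lemma poly_diff_op_add: "poly_diff_op (p + q) y t = poly_diff_op p y t + poly_diff_op q y t"
proof -
  define N where "N = max (degree p) (degree q)"
  have N: "degree p \<le> N" "degree q \<le> N" "degree (p + q) \<le> N"
    by (simp_all add: N_def degree_add_le)
  show ?thesis
    unfolding poly_diff_op_eq_sum[OF N(1)] poly_diff_op_eq_sum[OF N(2)] poly_diff_op_eq_sum[OF N(3)]
    by (simp add: cscale_add_left sum.distrib)
qed

lemma poly_diff_op_smult: "poly_diff_op (smult c q) y t = c *\<^sub>C poly_diff_op q y t"
  unfolding poly_diff_op_eq_sum[OF degree_smult_le] poly_diff_op_def
  by (simp add: cscale.scale_sum_right cscale_cscale)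

lemma poly_diff_op_sum: "poly_diff_op (\<Sum>x\<in>A. q x) y t = (\<Sum>x\<in>A. poly_diff_op (q x) y t)"
  by (induction A rule: infinite_finite_induct) (simp_all add: poly_diff_op_add)

definition char_polynomial :: "nat \<Rightarrow> (nat \<Rightarrow> complex) \<Rightarrow> complex poly" where
  "char_polynomial n a = monom 1 n + (\<Sum>j=1..n. monom (a j) (n - j))"

lemma poly_char_polynomial: "poly (char_polynomial n a) = char_poly n a"
  by (simp add: char_polynomial_def char_poly_def poly_sum poly_monom fun_eq_iff)

lemma char_polynomial_eq_prod:
  assumes roots: "\<forall>k\<in>{1..n}. char_poly n a (r k) = 0" and inj: "inj_on r {1..n}"
  shows "char_polynomial n a = (\<Prod>i\<in>{1..n}. [:- r i, 1:])"
proof (rule poly_eqI_degree_lead_coeff[where n = n and A = "r ` {1..n}"])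
  have "coeff (\<Sum>j=1..n. monom (a j) (n - j)) n = 0"
    by (auto simp: coeff_sum coeff_monom intro!: sum.neutral)
  then show "coeff (char_polynomial n a) n = coeff (\<Prod>i\<in>{1..n}. [:- r i, 1:]) n"
    using lead_coeff_prod[of "\<lambda>i. [:- r i, 1:]" "{1..n}"]
    by (simp add: char_polynomial_def degree_prod_sum_eq)
  show "degree (char_polynomial n a) \<le> n"
    unfolding char_polynomial_def
    by (intro degree_add_le degree_sum_le) (auto intro: order.trans[OF degree_monom_le])
  show "degree (\<Prod>i\<in>{1..n}. [:- r i, 1:]) \<le> n"
    by (simp add: degree_prod_sum_eq)
  show "n \<le> card (r ` {1..n})"
    using inj by (simp add: card_image)
  show "poly (char_polynomial n a) z = poly (\<Prod>i\<in>{1..n}. [:- r i, 1:]) z" if "z \<in> r ` {1..n}" for z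
    using that roots by (fastforce simp: poly_char_polynomial poly_prod)
qed

lemma Dop_eq_poly_diff_op: "Dop n a y t = poly_diff_op (char_polynomial n a) y t"
  by (simp add: Dop_def char_polynomial_def poly_diff_op_add poly_diff_op_sum poly_diff_op_monom cscale_one)

lemma has_vector_derivative_poly_diff_op:
  assumes y: "y \<in> Cn n" and q: "degree q < n"
  shows "(poly_diff_op q y has_vector_derivative poly_diff_op (pCons 0 q) y t) (at t within S)"
proof -
  have "(nth_deriv i y has_vector_derivative nth_deriv (Suc i) y t) (at t within S)" if "i \<le> degree q" for i
    using y q that by (auto simp: Cn_def vector_derivative_works intro: has_vector_derivative_at_within)
  then have "(poly_diff_op q y has_vector_derivative (\<Sum>i\<le>degree q. coeff q i *\<^sub>C nth_deriv (Suc i) y t)) (at t within S)"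
    unfolding poly_diff_op_def[abs_def] by (intro has_vector_derivative_sum has_vector_derivative_cscale_right) auto
  also have "(\<Sum>i\<le>degree q. coeff q i *\<^sub>C nth_deriv (Suc i) y t) = poly_diff_op (pCons 0 q) y t"
    unfolding poly_diff_op_eq_sum[OF degree_pCons_le] sum.atMost_Suc_shift by simp
  finally show ?thesis .
qed

lemma has_vector_derivative_poly_diff_op_factor:
  assumes "y \<in> Cn n" "degree q < n"
  shows "(poly_diff_op q y has_vector_derivative c *\<^sub>C poly_diff_op q y t + poly_diff_op ([:- c, 1:] * q) y t)
           (at t within S)"
proof -
  have "pCons 0 q = [:- c, 1:] * q + smult c q"
    by simp
  then have "poly_diff_op (pCons 0 q) y t = c *\<^sub>C poly_diff_op q y t + poly_diff_op ([:- c, 1:] * q) y t"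
    by (metis poly_diff_op_add poly_diff_op_smult add.commute)
  then show ?thesis
    using has_vector_derivative_poly_diff_op[OF assms] by metis
qed

lemma has_vector_derivative_integrating_factor:
  fixes u :: "real \<Rightarrow> 'a::complex_normed_vector"
  assumes "(u has_vector_derivative c *\<^sub>C u t + f) (at t within S)"
  shows "((\<lambda>s. exp (- c * complex_of_real s) *\<^sub>C u s) has_vector_derivative exp (- c * complex_of_real t) *\<^sub>C f)
           (at t within S)"
  using has_vector_derivative_cscale[OF has_vector_derivative_cexp[of "- c"] assms]
  by (simp add: cscale_add_right cscale_cscale cscale.scale_minus_left mult.commute)

section \<open>Exponential sums\<close>

definition exp_sum :: "'i set \<Rightarrow> ('i \<Rightarrow> complex) \<Rightarrow> ('i \<Rightarrow> 'a::complex_normed_vector) \<Rightarrow> real \<Rightarrow> 'a" where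
  "exp_sum I r G t = (\<Sum>k\<in>I. exp (r k * complex_of_real t) *\<^sub>C G k)"

lemma exp_sum_diff: "exp_sum I r G t - exp_sum I r H t = exp_sum I r (\<lambda>k. G k - H k) t"
  by (simp add: exp_sum_def sum_subtractf cscale.scale_right_diff_distrib)

lemma has_vector_derivative_exp_sum:
  "(exp_sum I r G has_vector_derivative exp_sum I r (\<lambda>k. r k *\<^sub>C G k) t) (at t within S)"
proof -
  have "(exp_sum I r G has_vector_derivative (\<Sum>k\<in>I. (r k * exp (r k * complex_of_real t)) *\<^sub>C G k)) (at t within S)"
    unfolding exp_sum_def[abs_def]
    by (intro has_vector_derivative_sum has_vector_derivative_cscale_left has_vector_derivative_cexp)
  then show ?thesis
    by (simp add: exp_sum_def cscale_cscale mult.commute)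
qed

lemma nth_deriv_exp_sum: "nth_deriv j (exp_sum I r G) = exp_sum I r (\<lambda>k. r k ^ j *\<^sub>C G k)"
proof (induction j)
  case (Suc j)
  show ?case
  proof
    fix t
    show "nth_deriv (Suc j) (exp_sum I r G) t = exp_sum I r (\<lambda>k. r k ^ Suc j *\<^sub>C G k) t"
      unfolding nth_deriv.simps Suc.IH vector_derivative_at[OF has_vector_derivative_exp_sum]
      by (simp add: cscale_cscale)
  qed
qed (simp add: cscale_one)

lemma exp_sum_in_Cn: "exp_sum I r G \<in> Cn n"
  unfolding Cn_def mem_Collect_eq nth_deriv_exp_sum
proof safe
  show "exp_sum I r H differentiable (at t)" for H and t :: real
    by (rule differentiableI_vector[OF has_vector_derivative_exp_sum])
  show "continuous_on UNIV (exp_sum I r H)" for H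
    unfolding exp_sum_def[abs_def] by (intro continuous_intros)
qed

lemma poly_diff_op_exp_sum: "poly_diff_op q (exp_sum I r G) t = exp_sum I r (\<lambda>k. poly q (r k) *\<^sub>C G k) t"
proof -
  have "poly_diff_op q (exp_sum I r G) t =
      (\<Sum>i\<le>degree q. \<Sum>k\<in>I. (coeff q i * r k ^ i * exp (r k * complex_of_real t)) *\<^sub>C G k)"
    unfolding poly_diff_op_def nth_deriv_exp_sum exp_sum_def
    by (simp add: cscale.scale_sum_right cscale_cscale mult_ac)
  also have "\<dots> = (\<Sum>k\<in>I. \<Sum>i\<le>degree q. (coeff q i * r k ^ i * exp (r k * complex_of_real t)) *\<^sub>C G k)"
    by (rule sum.swap)
  also have "\<dots> = exp_sum I r (\<lambda>k. poly q (r k) *\<^sub>C G k) t"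
    unfolding exp_sum_def poly_altdef cscale_cscale sum_distrib_left cscale.scale_sum_left
    by (simp add: cscale.scale_sum_right cscale_cscale mult_ac)
  finally show ?thesis .
qed

lemma Dop_exp_sum:
  assumes "\<forall>k\<in>I. char_poly n a (r k) = 0"
  shows "Dop n a (exp_sum I r G) = (\<lambda>_. 0)"
  using assms by (simp add: fun_eq_iff Dop_eq_poly_diff_op poly_diff_op_exp_sum poly_char_polynomial exp_sum_def)

lemma bounded_exp_cscale_eq_zero:
  fixes v :: "'a::complex_normed_vector"
  assumes c: "Re c \<noteq> 0" and bound: "\<And>t. norm (exp (c * complex_of_real t) *\<^sub>C v) \<le> M"
  shows "v = 0"
proof (rule ccontr)
  assume "v \<noteq> 0"
  have "M \<ge> 0"
    using bound[of 0] norm_ge_zero order.trans by blast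
  define t where "t = ln (M / norm v + 1) / Re c"
  have "exp (Re c * t) = M / norm v + 1"
    using c \<open>M \<ge> 0\<close> by (simp add: t_def add_nonneg_pos)
  then have "norm (exp (c * complex_of_real t) *\<^sub>C v) = M + norm v"
    using \<open>v \<noteq> 0\<close> by (simp add: norm_exp_cscale field_simps)
  with bound[of t] \<open>v \<noteq> 0\<close> show False
    by simp
qed

lemma exists_exp_step_inj_on:
  assumes "finite I" "inj_on r I"
  shows "\<exists>h>0. inj_on (\<lambda>k. exp (r k * complex_of_real h)) I"
proof -
  define h where "h = 1 / (1 + (\<Sum>k\<in>I. cmod (r k)))"
  have "(\<Sum>k\<in>I. cmod (r k)) \<ge> 0"
    by (simp add: sum_nonneg)
  then have h: "h > 0" "(\<Sum>k\<in>I. cmod (r k)) * h < 1"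
    by (auto simp: h_def field_simps)
  have "cmod (r k) * h < pi" if "k \<in> I" for k
  proof -
    have "cmod (r k) * h \<le> (\<Sum>k\<in>I. cmod (r k)) * h"
      using that assms h by (intro mult_right_mono member_le_sum) auto
    then show ?thesis
      using h pi_gt3 by linarith
  qed
  then have "(\<lambda>k. r k * complex_of_real h) ` I \<subseteq> ball 0 pi"
    using h by (auto simp: norm_mult)
  moreover have "inj_on (\<lambda>k. r k * complex_of_real h) I"
    using assms(2) h by (auto simp: inj_on_def)
  ultimately have "inj_on (exp \<circ> (\<lambda>k. r k * complex_of_real h)) I"
    by (intro comp_inj_on inj_on_subset[OF inj_on_exp_pi])
  then show ?thesis
    using h by (auto simp: o_def)
qed

lemma exp_sum_shift_combination:
  "(\<Sum>j\<le>degree L. coeff L j *\<^sub>C exp_sum I r G (t + real j * h)) =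
     exp_sum I r (\<lambda>k. poly L (exp (r k * complex_of_real h)) *\<^sub>C G k) t"
proof -
  have shift: "exp (r k * complex_of_real (t + real j * h)) = exp (r k * complex_of_real h) ^ j * exp (r k * complex_of_real t)"
    for k j
    by (simp add: distrib_left exp_add mult_ac flip: exp_of_nat_mult)
  have "(\<Sum>j\<le>degree L. coeff L j *\<^sub>C exp_sum I r G (t + real j * h)) =
      (\<Sum>k\<in>I. \<Sum>j\<le>degree L. (coeff L j * exp (r k * complex_of_real h) ^ j * exp (r k * complex_of_real t)) *\<^sub>C G k)"
    unfolding exp_sum_def shift
    by (subst sum.swap) (simp add: cscale.scale_sum_right cscale_cscale mult_ac)
  also have "\<dots> = exp_sum I r (\<lambda>k. poly L (exp (r k * complex_of_real h)) *\<^sub>C G k) t"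
    by (simp add: exp_sum_def poly_altdef cscale.scale_sum_right cscale.scale_sum_left cscale_cscale
        sum_distrib_right mult_ac)
  finally show ?thesis .
qed

text \<open>The finite difference operator with symbol \<open>L\<close> annihilates every exponential except the
  \<open>k\<close>-th, which then has to stay bounded on its own.\<close>

lemma exp_sum_bounded_imp_zero:
  fixes G :: "'i \<Rightarrow> 'a::complex_normed_vector"
  assumes I: "finite I" "inj_on r I" and re: "\<forall>k\<in>I. Re (r k) \<noteq> 0"
    and bound: "\<And>t. norm (exp_sum I r G t) \<le> M" and k: "k \<in> I"
  shows "G k = 0"
proof -
  obtain h where "h > 0" and inj: "inj_on (\<lambda>k. exp (r k * complex_of_real h)) I"
    using exists_exp_step_inj_on[OF I] by blast
  define z where "z k = exp (r k * complex_of_real h)" for k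
  define L where "L = lagrange_basis I z k"
  have annihilate: "exp_sum I r (\<lambda>m. poly L (z m) *\<^sub>C G m) t =
      exp (r k * complex_of_real t) *\<^sub>C (poly L (z k) *\<^sub>C G k)" for t
    unfolding exp_sum_def L_def using I k
    by (subst sum.remove[OF _ k]) (auto simp: poly_lagrange_basis_other intro!: sum.neutral)
  have "norm (exp (r k * complex_of_real t) *\<^sub>C (poly L (z k) *\<^sub>C G k)) \<le> (\<Sum>j\<le>degree L. cmod (coeff L j) * M)"
    for t
  proof -
    have "exp (r k * complex_of_real t) *\<^sub>C (poly L (z k) *\<^sub>C G k) =
        (\<Sum>j\<le>degree L. coeff L j *\<^sub>C exp_sum I r G (t + real j * h))"
      using annihilate[of t] by (simp add: z_def exp_sum_shift_combination)
    also have "norm \<dots> \<le> (\<Sum>j\<le>degree L. cmod (coeff L j) * M)"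
      by (intro order.trans[OF norm_sum] sum_mono) (simp add: norm_cscale mult_left_mono bound)
    finally show ?thesis .
  qed
  then have "poly L (z k) *\<^sub>C G k = 0"
    using re k by (intro bounded_exp_cscale_eq_zero) auto
  moreover have "poly L (z k) \<noteq> 0"
    using I k inj unfolding L_def z_def by (intro poly_lagrange_basis_self) auto
  ultimately show ?thesis
    by (metis cscale_cscale cscale_one cscale.scale_zero_right field_class.field_inverse)
qed

section \<open>Functions with exponentially decaying derivative\<close>

lemma norm_increment_le_exp_decay:
  fixes g :: "real \<Rightarrow> 'a::real_normed_vector"
  assumes \<alpha>: "\<alpha> > 0" and deriv: "\<And>x. (g has_vector_derivative g' x) (at x)"
    and bound: "\<And>x. norm (g' x) \<le> M * exp (- \<alpha> * x)" and "s \<le> u"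
  shows "norm (g u - g s) \<le> M / \<alpha> * exp (- \<alpha> * s)"
proof -
  have "M \<ge> 0"
    using order.trans[OF norm_ge_zero bound[of 0]] by simp
  have "norm (g u - g s) \<le> M / \<alpha> * exp (- \<alpha> * s) - M / \<alpha> * exp (- \<alpha> * u)"
  proof (cases "s = u")
    case False
    with \<open>s \<le> u\<close> have "s < u" by simp
    have "norm (g u - g s) \<le> - M / \<alpha> * exp (- \<alpha> * u) - - M / \<alpha> * exp (- \<alpha> * s)"
    proof (rule differentiable_bound_general[OF \<open>s < u\<close>, where f' = g' and \<phi>' = "\<lambda>x. M * exp (- \<alpha> * x)"])
      show "continuous_on {s..u} g"
        using deriv by (meson has_vector_derivative_continuous continuous_at_imp_continuous_on)
      show "((\<lambda>x. - M / \<alpha> * exp (- \<alpha> * x)) has_vector_derivative M * exp (- \<alpha> * x)) (at x)" for x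
        unfolding has_real_derivative_iff_has_vector_derivative[symmetric]
        using \<alpha> by (auto intro!: derivative_eq_intros)
    qed (use deriv bound \<alpha> in \<open>auto intro!: continuous_intros\<close>)
    then show ?thesis by simp
  qed simp
  also have "\<dots> \<le> M / \<alpha> * exp (- \<alpha> * s)"
    using \<open>M \<ge> 0\<close> \<alpha> by simp
  finally show ?thesis .
qed

lemma convergent_at_top_if_exp_decay_derivative:
  fixes g :: "real \<Rightarrow> 'a::banach"
  assumes \<alpha>: "\<alpha> > 0" and deriv: "\<And>x. (g has_vector_derivative g' x) (at x)"
    and bound: "\<And>x. norm (g' x) \<le> M * exp (- \<alpha> * x)"
  shows "\<exists>L. (g \<longlongrightarrow> L) at_top"
proof -
  have "filterlim (\<lambda>s. - \<alpha> * s) at_bot at_top"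
    using \<alpha> by (intro filterlim_tendsto_neg_mult_at_bot[OF tendsto_const _ filterlim_ident]) simp
  then have "((\<lambda>s. M / \<alpha> * exp (- \<alpha> * s)) \<longlongrightarrow> 0) at_top"
    by (intro tendsto_mult_right_zero filterlim_compose[OF exp_at_bot])
  have "cauchy_filter (filtermap g at_top)"
    unfolding cauchy_filter_metric_filtermap
  proof (intro allI impI)
    fix e :: real assume "e > 0"
    then obtain s0 where s0: "\<And>s. s \<ge> s0 \<Longrightarrow> M / \<alpha> * exp (- \<alpha> * s) < e / 2"
      using order_tendstoD(2)[OF \<open>(_ \<longlongrightarrow> 0) at_top\<close>, of "e / 2"] by (auto simp: eventually_at_top_linorder)
    have "dist (g x) (g y) < e" if "x \<ge> s0" "y \<ge> s0" for x y
    proof -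
      have "dist (g x) (g y) \<le> norm (g x - g s0) + norm (g y - g s0)"
        using dist_triangle2[of "g x" "g y" "g s0"] by (simp add: dist_norm)
      also have "\<dots> < e"
        using norm_increment_le_exp_decay[OF \<alpha> deriv bound] that s0[of s0]
        by (smt (verit) field_sum_of_halves)
      finally show ?thesis .
    qed
    then show "\<exists>P. eventually P at_top \<and> (\<forall>x y. P x \<and> P y \<longrightarrow> dist (g x) (g y) < e)"
      by (intro exI[of _ "\<lambda>x. x \<ge> s0"]) auto
  qed
  then obtain L where "filtermap g at_top \<le> nhds L"
    using cauchy_filter_complete_converges[OF _ complete_UNIV] by fastforce
  then show ?thesis
    by (auto simp: filterlim_def)
qed

lemma norm_diff_le_integral_of_derivative_bound:
  fixes \<Phi> :: "real \<Rightarrow> 'a::real_normed_vector"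
  assumes T: "0 < T" and deriv: "\<And>s. (\<Phi> has_vector_derivative \<Phi>' s) (at s)"
    and w: "continuous_on {0..T} w" and bound: "\<And>s. norm (\<Phi>' s) \<le> w s"
  shows "norm (\<Phi> T - \<Phi> 0) \<le> integral {0..T} w"
proof -
  have W: "((\<lambda>u. integral {0..u} w) has_vector_derivative w x) (at x within {0..T})" if "x \<in> {0..T}" for x
    by (rule integral_has_vector_derivative[OF w that])
  have "norm (\<Phi> T - \<Phi> 0) \<le> integral {0..T} w - integral {0..0} w"
  proof (rule differentiable_bound_general[OF T, where f' = \<Phi>' and \<phi>' = w])
    show "continuous_on {0..T} \<Phi>"
      using deriv by (meson has_vector_derivative_continuous continuous_at_imp_continuous_on)
    show "continuous_on {0..T} (\<lambda>u. integral {0..u} w)"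
      using W has_vector_derivative_continuous continuous_on_eq_continuous_within by blast
    show "((\<lambda>u. integral {0..u} w) has_vector_derivative w x) (at x)" if "0 < x" "x < T" for x
      using W[of x] that at_within_interior[of x "{0..T}"] by simp
  qed (use deriv bound in auto)
  then show ?thesis by simp
qed

lemma exp_sum_weight_absolutely_integrable:
  assumes "finite J" and pos: "\<forall>k\<in>J. Re (r k) > 0"
  shows "(\<lambda>s. cmod (\<Sum>k\<in>J. b k * exp (- r k * complex_of_real s))) absolutely_integrable_on {0..}"
proof (rule measurable_bounded_by_integrable_imp_absolutely_integrable)
  show "(\<lambda>s. cmod (\<Sum>k\<in>J. b k * exp (- r k * complex_of_real s))) \<in> borel_measurable (lebesgue_on {0..})"
    by (intro continuous_imp_measurable_on_sets_lebesgue continuous_intros) auto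
  show "(\<lambda>s. \<Sum>k\<in>J. cmod (b k) * exp (- Re (r k) * s)) integrable_on {0..}"
  proof (intro integrable_sum)
    show "(\<lambda>s. cmod (b k) * exp (- Re (r k) * s)) integrable_on {0..}" if "k \<in> J" for k
      using integrable_on_cmult_left[OF integrable_on_exp_minus_to_infinity] pos that by fastforce
  qed fact
  show "norm (cmod (\<Sum>k\<in>J. b k * exp (- r k * complex_of_real s))) \<le> (\<Sum>k\<in>J. cmod (b k) * exp (- Re (r k) * s))"
    for s
    using norm_sum[of "\<lambda>k. b k * exp (- r k * complex_of_real s)" J] by (simp add: norm_mult)
qed auto

lemma set_integrable_lborel_if_continuous:
  fixes F :: "'a::euclidean_space \<Rightarrow> real"
  assumes "continuous_on UNIV F" "S \<in> sets borel" "F absolutely_integrable_on S"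
  shows "set_integrable lborel S F"
proof -
  have "(\<lambda>x. indicator S x *\<^sub>R F x) \<in> borel_measurable lborel"
    using borel_measurable_continuous_onI[OF assms(1)] assms(2) by measurable
  then show ?thesis
    using assms(3) integrable_completion unfolding set_integrable_def by blast
qed

text \<open>The sum inside the norm equals \<open>- \<integral>\<^sub>0\<^sup>\<infinity> (\<Sum>\<^sub>k b\<^sub>k exp (- r\<^sub>k s)) f(t + s) ds\<close>.\<close>

lemma exp_weighted_tail_bound:
  fixes g :: "'i \<Rightarrow> real \<Rightarrow> 'a::complex_normed_vector"
  assumes deriv: "\<And>k s. k \<in> J \<Longrightarrow> (g k has_vector_derivative exp (- r k * complex_of_real s) *\<^sub>C f s) (at s)"
    and lim: "\<And>k. k \<in> J \<Longrightarrow> (g k \<longlongrightarrow> C k) at_top"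
    and f: "\<And>s. norm (f s) \<le> \<epsilon>"
    and w: "(\<lambda>s. cmod (\<Sum>k\<in>J. b k * exp (- r k * complex_of_real s))) integrable_on {0..}"
  shows "norm (\<Sum>k\<in>J. (b k * exp (r k * complex_of_real t)) *\<^sub>C (g k t - C k))
           \<le> \<epsilon> * integral {0..} (\<lambda>s. cmod (\<Sum>k\<in>J. b k * exp (- r k * complex_of_real s)))"
proof -
  define A where "A s = (\<Sum>k\<in>J. b k * exp (- r k * complex_of_real s))" for s
  define \<Phi> where "\<Phi> T = (\<Sum>k\<in>J. (b k * exp (r k * complex_of_real t)) *\<^sub>C g k (t + T))" for T
  define \<Phi>_lim where "\<Phi>_lim = (\<Sum>k\<in>J. (b k * exp (r k * complex_of_real t)) *\<^sub>C C k)"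
  have cont_A: "continuous_on S A" for S
    unfolding A_def by (intro continuous_intros)
  have \<Phi>': "(\<Phi> has_vector_derivative A s *\<^sub>C f (t + s)) (at s)" for s
  proof -
    have "((\<lambda>T. g k (t + T)) has_vector_derivative exp (- r k * complex_of_real (t + s)) *\<^sub>C f (t + s)) (at s)"
      if "k \<in> J" for k
      using vector_diff_chain_at[OF has_vector_derivative_add[OF has_vector_derivative_const has_vector_derivative_id]
          deriv[OF that]]
      by (simp add: o_def)
    then have "(\<Phi> has_vector_derivative
        (\<Sum>k\<in>J. (b k * exp (r k * complex_of_real t)) *\<^sub>C (exp (- r k * complex_of_real (t + s)) *\<^sub>C f (t + s)))) (at s)"
      unfolding \<Phi>_def by (intro has_vector_derivative_sum has_vector_derivative_cscale_right)
    moreover have "exp (r k * complex_of_real t) * exp (- r k * complex_of_real (t + s)) = exp (- r k * complex_of_real s)"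
      for k
      by (simp add: algebra_simps flip: exp_add)
    ultimately show ?thesis
      by (simp add: A_def cscale_cscale cscale.scale_sum_left mult.assoc)
  qed
  have "(\<Phi> \<longlongrightarrow> \<Phi>_lim) at_top"
    unfolding \<Phi>_def \<Phi>_lim_def
    by (intro tendsto_sum tendsto_cscale_right filterlim_compose[OF lim] filterlim_tendsto_add_at_top[OF tendsto_const filterlim_ident])
  then have "((\<lambda>T. norm (\<Phi> T - \<Phi> 0)) \<longlongrightarrow> norm (\<Phi>_lim - \<Phi> 0)) at_top"
    by (intro tendsto_intros)
  moreover have "norm (\<Phi> T - \<Phi> 0) \<le> \<epsilon> * integral {0..} (\<lambda>s. cmod (A s))" if "T > 0" for T
  proof -
    have "norm (\<Phi> T - \<Phi> 0) \<le> integral {0..T} (\<lambda>s. \<epsilon> * cmod (A s))"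
      using that
      by (intro norm_diff_le_integral_of_derivative_bound[OF _ \<Phi>'] continuous_intros cont_A)
        (simp_all add: norm_cscale mult.commute[of "cmod _"] mult_right_mono[OF f])
    also have "\<dots> = \<epsilon> * integral {0..T} (\<lambda>s. cmod (A s))"
      by simp
    also have "\<dots> \<le> \<epsilon> * integral {0..} (\<lambda>s. cmod (A s))"
      using w order.trans[OF norm_ge_zero f]
      by (intro mult_left_mono integral_subset_le integrable_continuous_interval continuous_intros cont_A) (auto simp: A_def)
    finally show ?thesis .
  qed
  then have "eventually (\<lambda>T. norm (\<Phi> T - \<Phi> 0) \<le> \<epsilon> * integral {0..} (\<lambda>s. cmod (A s))) at_top"
    by (rule eventually_mono[OF eventually_gt_at_top[of 0]])
  ultimately have "norm (\<Phi>_lim - \<Phi> 0) \<le> \<epsilon> * integral {0..} (\<lambda>s. cmod (A s))"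
    by (rule tendsto_upperbound) simp
  moreover have "\<Phi>_lim - \<Phi> 0 = - (\<Sum>k\<in>J. (b k * exp (r k * complex_of_real t)) *\<^sub>C (g k t - C k))"
    by (simp add: \<Phi>_def \<Phi>_lim_def cscale.scale_right_diff_distrib sum_subtractf)
  ultimately show ?thesis
    by (simp add: A_def)
qed

section \<open>Equations whose characteristic polynomial has simple roots\<close>

locale simple_char_roots =
  fixes n :: nat and a r :: "nat \<Rightarrow> complex"
  assumes n_ge_1: "n \<ge> 1"
    and roots: "\<forall>k\<in>{1..n}. char_poly n a (r k) = 0"
    and inj: "inj_on r {1..n}"
begin

abbreviation Q :: "nat \<Rightarrow> complex poly" where
  "Q \<equiv> lagrange_basis {1..n} r"

text \<open>The partial fraction coefficients: \<open>1 / P(z) = (\<Sum>k. weight k / (z - r k))\<close>.\<close>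

definition weight :: "nat \<Rightarrow> complex" where
  "weight k = inverse (poly (Q k) (r k))"

definition mode :: "(real \<Rightarrow> 'a::complex_normed_vector) \<Rightarrow> nat \<Rightarrow> real \<Rightarrow> 'a" where
  "mode y k = poly_diff_op (Q k) y"

lemma char_polynomial_eq: "k \<in> {1..n} \<Longrightarrow> char_polynomial n a = [:- r k, 1:] * Q k"
  using char_polynomial_eq_prod[OF roots inj] lagrange_basis_factor[of "{1..n}" k r] by simp

lemma degree_Q_less: "k \<in> {1..n} \<Longrightarrow> degree (Q k) < n"
  using n_ge_1 by (simp add: degree_lagrange_basis)

lemma has_vector_derivative_mode:
  assumes "k \<in> {1..n}" "y \<in> Cn n"
  shows "(mode y k has_vector_derivative r k *\<^sub>C mode y k t + Dop n a y t) (at t within S)"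
  using has_vector_derivative_poly_diff_op_factor[OF assms(2) degree_Q_less[OF assms(1)]]
  by (simp add: mode_def Dop_eq_poly_diff_op char_polynomial_eq[OF assms(1)])

lemma sum_modes: "y t = (\<Sum>k\<in>{1..n}. weight k *\<^sub>C mode y k t)"
proof -
  have "(\<Sum>k\<in>{1..n}. smult (weight k) (Q k)) = 1"
    unfolding weight_def using n_ge_1 inj by (intro sum_lagrange_basis) auto
  then have "y t = poly_diff_op (\<Sum>k\<in>{1..n}. smult (weight k) (Q k)) y t"
    by simp
  then show ?thesis
    by (simp add: poly_diff_op_sum poly_diff_op_smult mode_def)
qed

definition mode_amplitude :: "(real \<Rightarrow> 'a::complex_normed_vector) \<Rightarrow> nat \<Rightarrow> real \<Rightarrow> 'a" where
  "mode_amplitude y k s = exp (- r k * complex_of_real s) *\<^sub>C mode y k s"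

lemma mode_eq_amplitude: "mode y k t = exp (r k * complex_of_real t) *\<^sub>C mode_amplitude y k t"
  by (simp add: mode_amplitude_def cscale_cscale cscale_one flip: exp_add)

lemma has_vector_derivative_mode_amplitude:
  assumes "k \<in> {1..n}" "y \<in> Cn n"
  shows "(mode_amplitude y k has_vector_derivative exp (- r k * complex_of_real s) *\<^sub>C Dop n a y s) (at s within S)"
  unfolding mode_amplitude_def[abs_def]
  by (rule has_vector_derivative_integrating_factor[OF has_vector_derivative_mode[OF assms]])

lemma has_vector_derivative_mode_amplitude_mirror:
  assumes "k \<in> {1..n}" "y \<in> Cn n"
  shows "((\<lambda>s. mode_amplitude y k (- s)) has_vector_derivative
           exp (- (- r k) * complex_of_real s) *\<^sub>C - Dop n a y (- s)) (at s)"
  using vector_diff_chain_at[OF has_vector_derivative_minus[OF has_vector_derivative_id]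
      has_vector_derivative_mode_amplitude[OF assms]]
  by (simp add: o_def cscale.scale_minus_right)

lemma mode_of_kernel:
  assumes k: "k \<in> {1..n}" and y: "y \<in> Cn n" "Dop n a y = (\<lambda>_. 0)"
  shows "mode y k t = exp (r k * complex_of_real t) *\<^sub>C mode y k 0"
proof -
  have "(mode_amplitude y k has_vector_derivative 0) (at s within UNIV)" for s
    using has_vector_derivative_mode_amplitude[OF k y(1)] y(2) by (simp add: cscale.scale_zero_right)
  then obtain c where "\<And>s. s \<in> UNIV \<Longrightarrow> mode_amplitude y k s = c"
    by (rule has_vector_derivative_zero_constant[OF convex_UNIV]) blast
  then show ?thesis
    using mode_eq_amplitude[of y k t] mode_eq_amplitude[of y k 0] by (simp add: cscale_one)
qed

lemma kernel_eq_exp_sum: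
  assumes "y \<in> Cn n" "Dop n a y = (\<lambda>_. 0)"
  shows "y = exp_sum {1..n} r (\<lambda>k. weight k *\<^sub>C mode y k 0)"
proof
  fix t
  have "weight k *\<^sub>C mode y k t = exp (r k * complex_of_real t) *\<^sub>C (weight k *\<^sub>C mode y k 0)"
    if "k \<in> {1..n}" for k
    unfolding mode_of_kernel[OF that assms, of t] by (simp add: cscale_cscale mult.commute)
  then show "y t = exp_sum {1..n} r (\<lambda>k. weight k *\<^sub>C mode y k 0) t"
    unfolding sum_modes[of y t] exp_sum_def by (intro sum.cong) auto
qed

lemma kernel_bounded_diff_unique:
  assumes re: "\<forall>k\<in>{1..n}. Re (r k) \<noteq> 0"
    and y: "y \<in> Cn n" "Dop n a y = (\<lambda>_. 0)" and z: "z \<in> Cn n" "Dop n a z = (\<lambda>_. 0)"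
    and bound: "\<And>t. norm (y t - z t) \<le> M"
  shows "y = z"
proof -
  define G where "G = (\<lambda>k. weight k *\<^sub>C mode y k 0 - weight k *\<^sub>C mode z k 0)"
  have "y t - z t = exp_sum {1..n} r G t" for t
    by (subst kernel_eq_exp_sum[OF y], subst kernel_eq_exp_sum[OF z]) (simp add: exp_sum_diff G_def)
  then have "norm (exp_sum {1..n} r G t) \<le> M" for t
    using bound by metis
  then have "G k = 0" if "k \<in> {1..n}" for k
    using exp_sum_bounded_imp_zero[OF _ inj re _ that] by blast
  then have "exp_sum {1..n} r (\<lambda>k. weight k *\<^sub>C mode y k 0) = exp_sum {1..n} r (\<lambda>k. weight k *\<^sub>C mode z k 0)"
    unfolding exp_sum_def G_def by (intro ext sum.cong) auto
  then show ?thesis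
    using kernel_eq_exp_sum[OF y] kernel_eq_exp_sum[OF z] by simp
qed

lemma signed_minor_eq_weight:
  assumes k: "k \<in> {1..n}"
  shows "(-1) ^ k * vandermonde (map r ([1..<k] @ [k+1..<n+1])) = (-1) ^ n * vandermonde (map r [1..<n+1]) * weight k"
proof -
  have "poly (Q k) (r k) \<noteq> 0"
    using inj k by (intro poly_lagrange_basis_self) auto
  moreover have "(-1::complex) ^ n = (-1) ^ k * (-1) ^ (n - k)"
    using k by (simp flip: power_add)
  ultimately show ?thesis
    unfolding vandermonde_delete[OF k, of r] weight_def by (simp add: field_simps)
qed

lemma sum_signed_minors:
  assumes "J \<subseteq> {1..n}"
  shows "(\<Sum>k\<in>J. (-1) ^ k * vandermonde (map r ([1..<k] @ [k+1..<n+1])) * e k) =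
           (-1) ^ n * vandermonde (map r [1..<n+1]) * (\<Sum>k\<in>J. weight k * e k)"
  unfolding sum_distrib_left
proof (intro sum.cong refl)
  fix k assume "k \<in> J"
  with assms have "k \<in> {1..n}" by auto
  then show "(-1) ^ k * vandermonde (map r ([1..<k] @ [k+1..<n+1])) * e k =
      (-1) ^ n * vandermonde (map r [1..<n+1]) * (weight k * e k)"
    by (metis signed_minor_eq_weight mult.assoc)
qed

text \<open>For \<open>y\<^sub>H\<close> as constructed below and \<open>f = D(y)\<close>,
  \<open>y(t) - y\<^sub>H(t) = - \<integral>\<^sub>0\<^sup>\<infinity> green_pos p s f(t + s) ds + \<integral>\<^sub>0\<^sup>\<infinity> green_neg p s f(t - s) ds\<close>.\<close>

definition green_pos :: "nat \<Rightarrow> real \<Rightarrow> complex" where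
  "green_pos p s = (\<Sum>k=1..p. weight k * exp (- r k * complex_of_real s))"

definition green_neg :: "nat \<Rightarrow> real \<Rightarrow> complex" where
  "green_neg p s = (\<Sum>k=p+1..n. weight k * exp (r k * complex_of_real s))"

lemma green_absolutely_integrable:
  assumes pos: "\<forall>k\<in>{1..p}. Re (r k) > 0" and neg: "\<forall>k\<in>{p+1..n}. Re (r k) < 0"
  shows "(\<lambda>s. cmod (green_pos p s)) absolutely_integrable_on {0..}"
    and "(\<lambda>s. cmod (green_neg p s)) absolutely_integrable_on {0..}"
  using exp_sum_weight_absolutely_integrable[of "{1..p}" r weight]
    exp_sum_weight_absolutely_integrable[of "{p+1..n}" "\<lambda>k. - r k" weight] pos neg
  by (simp_all add: green_pos_def green_neg_def)

lemma mode_amplitude_limits: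
  fixes y :: "real \<Rightarrow> 'a::complex_banach"
  assumes y: "y \<in> Cn n" and f: "\<And>t. norm (Dop n a y t) \<le> \<epsilon>" and "p \<le> n"
    and pos: "\<forall>k\<in>{1..p}. Re (r k) > 0" and neg: "\<forall>k\<in>{p+1..n}. Re (r k) < 0"
  shows "\<exists>C. (\<forall>k\<in>{1..p}. (mode_amplitude y k \<longlongrightarrow> C k) at_top) \<and>
             (\<forall>k\<in>{p+1..n}. ((\<lambda>s. mode_amplitude y k (- s)) \<longlongrightarrow> C k) at_top)"
proof -
  have bound: "norm (exp (- c * complex_of_real s) *\<^sub>C v) \<le> \<epsilon> * exp (- Re c * s)" if "norm v \<le> \<epsilon>" for c s and v :: 'a
    unfolding norm_exp_cscale using mult_left_mono[OF that, of "exp (Re (- c) * s)"] by (simp add: mult.commute)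
  have "\<exists>L. if k \<le> p then (mode_amplitude y k \<longlongrightarrow> L) at_top else ((\<lambda>s. mode_amplitude y k (- s)) \<longlongrightarrow> L) at_top"
    if k: "k \<in> {1..n}" for k
  proof (cases "k \<le> p")
    case True
    have "\<exists>L. (mode_amplitude y k \<longlongrightarrow> L) at_top"
      by (rule convergent_at_top_if_exp_decay_derivative[OF _ has_vector_derivative_mode_amplitude[OF k y] bound[OF f]])
        (use True k pos in auto)
    then show ?thesis
      using True by simp
  next
    case False
    have "\<exists>L. ((\<lambda>s. mode_amplitude y k (- s)) \<longlongrightarrow> L) at_top"
      by (rule convergent_at_top_if_exp_decay_derivative[OF _ has_vector_derivative_mode_amplitude_mirror[OF k y] bound])
        (use False k neg f in auto)
    then show ?thesis
      using False by simp
  qed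
  then obtain C where C: "\<And>k. k \<in> {1..n} \<Longrightarrow> if k \<le> p then (mode_amplitude y k \<longlongrightarrow> C k) at_top
      else ((\<lambda>s. mode_amplitude y k (- s)) \<longlongrightarrow> C k) at_top"
    by metis
  show ?thesis
  proof (intro exI[of _ C] conjI ballI)
    show "(mode_amplitude y k \<longlongrightarrow> C k) at_top" if "k \<in> {1..p}" for k
      using C[of k] that \<open>p \<le> n\<close> by simp
    show "((\<lambda>s. mode_amplitude y k (- s)) \<longlongrightarrow> C k) at_top" if "k \<in> {p+1..n}" for k
      using C[of k] that by simp
  qed
qed

lemma diff_exp_sum_eq_amplitudes:
  "y t - exp_sum {1..n} r (\<lambda>k. weight k *\<^sub>C C k) t =
     (\<Sum>k\<in>{1..n}. (weight k * exp (r k * complex_of_real t)) *\<^sub>C (mode_amplitude y k t - C k))"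
  unfolding sum_modes[of y t] exp_sum_def mode_eq_amplitude
  by (simp add: cscale_cscale cscale.scale_right_diff_distrib mult_ac flip: sum_subtractf)

lemma exists_kernel_approximation:
  fixes y :: "real \<Rightarrow> 'a::complex_banach"
  assumes y: "y \<in> Cn n" and f: "\<And>t. norm (Dop n a y t) \<le> \<epsilon>" and "p \<le> n"
    and pos: "\<forall>k\<in>{1..p}. Re (r k) > 0" and neg: "\<forall>k\<in>{p+1..n}. Re (r k) < 0"
  shows "\<exists>y\<^sub>H. y\<^sub>H \<in> Cn n \<and> Dop n a y\<^sub>H = (\<lambda>_. 0) \<and>
           (\<forall>t. norm (y t - y\<^sub>H t) \<le>
                 \<epsilon> * (integral {0..} (\<lambda>s. cmod (green_pos p s)) + integral {0..} (\<lambda>s. cmod (green_neg p s))))"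
proof -
  obtain C where C_pos: "\<And>k. k \<in> {1..p} \<Longrightarrow> (mode_amplitude y k \<longlongrightarrow> C k) at_top"
    and C_neg: "\<And>k. k \<in> {p+1..n} \<Longrightarrow> ((\<lambda>s. mode_amplitude y k (- s)) \<longlongrightarrow> C k) at_top"
    using mode_amplitude_limits[OF y f \<open>p \<le> n\<close> pos neg] by blast
  have integrable: "(\<lambda>s. cmod (green_pos p s)) integrable_on {0..}" "(\<lambda>s. cmod (green_neg p s)) integrable_on {0..}"
    using green_absolutely_integrable[OF pos neg] by (simp_all add: set_lebesgue_integral_eq_integral(1))
  define y\<^sub>H where "y\<^sub>H = exp_sum {1..n} r (\<lambda>k. weight k *\<^sub>C C k)"
  define A where "A k t = (weight k * exp (r k * complex_of_real t)) *\<^sub>C (mode_amplitude y k t - C k)" for k t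
  have "norm (y t - y\<^sub>H t) \<le>
      \<epsilon> * integral {0..} (\<lambda>s. cmod (green_pos p s)) + \<epsilon> * integral {0..} (\<lambda>s. cmod (green_neg p s))" for t
  proof -
    have "{1..n} = {1..p} \<union> {p+1..n}" "{1..p} \<inter> {p+1..n} = {}"
      using \<open>p \<le> n\<close> by auto
    then have "y t - y\<^sub>H t = (\<Sum>k=1..p. A k t) + (\<Sum>k=p+1..n. A k t)"
      unfolding y\<^sub>H_def diff_exp_sum_eq_amplitudes A_def by (simp add: sum.union_disjoint)
    moreover have "norm (\<Sum>k=1..p. A k t) \<le> \<epsilon> * integral {0..} (\<lambda>s. cmod (green_pos p s))"
      unfolding A_def green_pos_def
      using \<open>p \<le> n\<close> integrable(1)[unfolded green_pos_def]
      by (intro exp_weighted_tail_bound[OF has_vector_derivative_mode_amplitude[OF _ y] C_pos f]) auto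
    moreover have "norm (\<Sum>k=p+1..n. A k t) \<le> \<epsilon> * integral {0..} (\<lambda>s. cmod (green_neg p s))"
      using exp_weighted_tail_bound[of "{p+1..n}" "\<lambda>k s. mode_amplitude y k (- s)" "\<lambda>k. - r k"
          "\<lambda>s. - Dop n a y (- s)" C \<epsilon> weight "- t", OF has_vector_derivative_mode_amplitude_mirror[OF _ y] C_neg]
        f integrable(2)
      by (simp add: A_def green_neg_def)
    ultimately show ?thesis
      using norm_triangle_ineq[of "\<Sum>k=1..p. A k t" "\<Sum>k=p+1..n. A k t"] by simp
  qed
  moreover have "y\<^sub>H \<in> Cn n" "Dop n a y\<^sub>H = (\<lambda>_. 0)"
    using roots by (simp_all add: y\<^sub>H_def exp_sum_in_Cn Dop_exp_sum)
  ultimately show ?thesis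
    by (auto simp: distrib_left)
qed

lemma vandermonde_integral_eq_green_integrals:
  assumes "p \<le> n" and pos: "\<forall>k\<in>{1..p}. Re (r k) > 0" and neg: "\<forall>k\<in>{p+1..n}. Re (r k) < 0"
  shows "1 / cmod (vandermonde (map r [1..<n+1])) *
      (LBINT x:{0..}.
         cmod (\<Sum>k=1..p. (-1)^k * vandermonde (map r ([1..<k] @ [k+1..<n+1])) * exp (- r k * complex_of_real x))
       + cmod (\<Sum>k=p+1..n. (-1)^k * vandermonde (map r ([1..<k] @ [k+1..<n+1])) * exp (r k * complex_of_real x)))
    = integral {0..} (\<lambda>s. cmod (green_pos p s)) + integral {0..} (\<lambda>s. cmod (green_neg p s))"
proof -
  define V where "V = vandermonde (map r [1..<n+1])"
  have "set [1..<n+1] = {1..n}"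
    by auto
  then have "V \<noteq> 0"
    unfolding V_def using inj by (intro vandermonde_nonzero) (simp add: distinct_map)
  have "(\<Sum>k=1..p. (-1)^k * vandermonde (map r ([1..<k] @ [k+1..<n+1])) * exp (- r k * complex_of_real x)) =
      (-1)^n * V * green_pos p x" for x
    unfolding green_pos_def V_def using \<open>p \<le> n\<close> by (intro sum_signed_minors) auto
  moreover have "(\<Sum>k=p+1..n. (-1)^k * vandermonde (map r ([1..<k] @ [k+1..<n+1])) * exp (r k * complex_of_real x)) =
      (-1)^n * V * green_neg p x" for x
    unfolding green_neg_def V_def by (intro sum_signed_minors) auto
  moreover have "set_integrable lborel {0..} (\<lambda>s. cmod (green_pos p s))" "set_integrable lborel {0..} (\<lambda>s. cmod (green_neg p s))"
    using green_absolutely_integrable[OF pos neg]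
    by (auto intro!: set_integrable_lborel_if_continuous continuous_intros simp: green_pos_def green_neg_def)
  ultimately show ?thesis
    using \<open>V \<noteq> 0\<close>
    by (simp add: V_def norm_mult norm_power distrib_left set_borel_integral_eq_integral(2))
qed

end

theorem theorem1:
  fixes n p :: nat and a r :: "nat \<Rightarrow> complex" and \<epsilon> K :: real
    and y :: "real \<Rightarrow> 'x::complex_banach"
  assumes "n \<ge> 1"
    and roots: "\<forall>k\<in>{1..n}. char_poly n a (r k) = 0"
    and distinct: "inj_on r {1..n}"
    and "\<forall>k\<in>{1..n}. Re (r k) \<noteq> 0"
    and "p \<le> n"
    and pos: "\<forall>k\<in>{1..p}. Re (r k) > 0"
    and neg: "\<forall>k\<in>{p+1..n}. Re (r k) < 0"
    and "\<epsilon> > 0"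
    and K_def: "K = (1 / cmod (vandermonde (map r [1..<n+1]))) *
        (LBINT x:{0..}.
           cmod (\<Sum>k=1..p. (-1)^k * vandermonde (map r ([1..<k] @ [k+1..<n+1])) * exp (- r k * complex_of_real x))
         + cmod (\<Sum>k=p+1..n. (-1)^k * vandermonde (map r ([1..<k] @ [k+1..<n+1])) * exp (r k * complex_of_real x)))"
    and "y \<in> Cn n"
    and "sup_norm (Dop n a y) \<le> ereal \<epsilon>"
  shows "\<exists>!yH. yH \<in> Cn n \<and> Dop n a yH = (\<lambda>_. 0) \<and> sup_norm (\<lambda>t. y t - yH t) \<le> ereal (K * \<epsilon>)"
proof -
  interpret simple_char_roots n a r
    using assms(1) roots distinct by unfold_locales
  have K: "K = integral {0..} (\<lambda>s. cmod (green_pos p s)) + integral {0..} (\<lambda>s. cmod (green_neg p s))"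
    unfolding K_def using vandermonde_integral_eq_green_integrals[OF \<open>p \<le> n\<close> pos neg] .
  obtain yH where yH: "yH \<in> Cn n" "Dop n a yH = (\<lambda>_. 0)" and close: "\<And>t. norm (y t - yH t) \<le> K * \<epsilon>"
    using exists_kernel_approximation[OF \<open>y \<in> Cn n\<close> _ \<open>p \<le> n\<close> pos neg, of \<epsilon>] assms(11)
    by (auto simp: sup_norm_le_iff K mult.commute)
  show ?thesis
  proof (rule ex1I[of _ yH])
    fix z assume z: "z \<in> Cn n \<and> Dop n a z = (\<lambda>_. 0) \<and> sup_norm (\<lambda>t. y t - z t) \<le> ereal (K * \<epsilon>)"
    have "norm (z t - yH t) \<le> 2 * (K * \<epsilon>)" for t
    proof -
      have "norm (z t - yH t) \<le> norm (y t - yH t) + norm (y t - z t)"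
        using norm_triangle_ineq4[of "y t - yH t" "y t - z t"] by simp
      moreover have "norm (y t - z t) \<le> K * \<epsilon>"
        using z by (simp add: sup_norm_le_iff)
      ultimately show ?thesis
        using close[of t] by simp
    qed
    then show "z = yH"
      using kernel_bounded_diff_unique[OF assms(4) _ _ yH] z by blast
  qed (use yH close in \<open>simp add: sup_norm_le_iff\<close>)
qed

end
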